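(* Let $\Gamma\curvearrowright X, I$ be a dynamical ideal. If it has cofinal orbits, then Player II has a winning strategy in the DC game.
   Context: A dynamical ideal $\Gamma\curvearrowright X, I$: a group $\Gamma$ acting on a set $X$ and an ideal $I$ on $X$ containing all singletons and invariant under the action ($\gamma\cdot a=\{\gamma\cdot x:x\in a\}\in I$ for $a\in I$). For $a\subseteq X$, $\mathrm{pstab}(a)=\{\gamma\in\Gamma:\gamma\cdot x=x\ \forall x\in a\}$. For $a,b\in I$, $b$ is $a$-large if for every $c\in I$ there is $\gamma\in\mathrm{pstab}(a)$ with $c\subseteq\gamma\cdot b$; the dynamical ideal has cofinal orbits if every $a\in I$ has an $a$-large $b\in I$. The DC game: players I and II alternate for $\omega$ rounds; at round $n$ Player I plays $a_n\in I$ and Player II answers with $\gamma_n\in\Gamma$, subject to $\gamma_0=1$ and $\gamma_n$ fixes every element of $\bigcup_{m<n}\gamma_m\cdot a_m$. Player II wins if $\bigcup_n\gamma_n\cdot a_n\in I$. *)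

theory Defs
  imports "HOL-Algebra.Group_Action"
begin

definition is_ideal_on :: "'x set \<Rightarrow> 'x set set \<Rightarrow> bool" where
  "is_ideal_on X I \<longleftrightarrow> I \<subseteq> Pow X \<and> {} \<in> I \<and>
     (\<forall>a\<in>I. \<forall>b. b \<subseteq> a \<longrightarrow> b \<in> I) \<and>
     (\<forall>a\<in>I. \<forall>b\<in>I. a \<union> b \<in> I)"

definition dynamical_ideal ::
  "('g, 'm) monoid_scheme \<Rightarrow> 'x set \<Rightarrow> ('g \<Rightarrow> 'x \<Rightarrow> 'x) \<Rightarrow> 'x set set \<Rightarrow> bool" where
  "dynamical_ideal G X \<phi> I \<longleftrightarrow> group_action G X \<phi> \<and> is_ideal_on X I \<and>
     (\<forall>x\<in>X. {x} \<in> I) \<and>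
     (\<forall>g\<in>carrier G. \<forall>a\<in>I. \<phi> g ` a \<in> I)"

definition pstab ::
  "('g, 'm) monoid_scheme \<Rightarrow> ('g \<Rightarrow> 'x \<Rightarrow> 'x) \<Rightarrow> 'x set \<Rightarrow> 'g set" where
  "pstab G \<phi> a = {g \<in> carrier G. \<forall>x\<in>a. \<phi> g x = x}"

definition is_large ::
  "('g, 'm) monoid_scheme \<Rightarrow> ('g \<Rightarrow> 'x \<Rightarrow> 'x) \<Rightarrow> 'x set set \<Rightarrow> 'x set \<Rightarrow> 'x set \<Rightarrow> bool" where
  "is_large G \<phi> I a b \<longleftrightarrow> (\<forall>c\<in>I. \<exists>g\<in>pstab G \<phi> a. c \<subseteq> \<phi> g ` b)"

definition cofinal_orbits ::
  "('g, 'm) monoid_scheme \<Rightarrow> ('g \<Rightarrow> 'x \<Rightarrow> 'x) \<Rightarrow> 'x set set \<Rightarrow> bool" where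
  "cofinal_orbits G \<phi> I \<longleftrightarrow> (\<forall>a\<in>I. \<exists>b\<in>I. is_large G \<phi> I a b)"

text \<open>A strategy for Player II maps the finite list of Player I's moves
[a_0, ..., a_n] to the answer gamma_n (Player II's earlier answers are determined
by the strategy itself).\<close>
definition play_II :: "('x set list \<Rightarrow> 'g) \<Rightarrow> (nat \<Rightarrow> 'x set) \<Rightarrow> nat \<Rightarrow> 'g" where
  "play_II \<sigma> a n = \<sigma> (map a [0..<Suc n])"

definition DC_winning_II ::
  "('g, 'm) monoid_scheme \<Rightarrow> ('g \<Rightarrow> 'x \<Rightarrow> 'x) \<Rightarrow> 'x set set \<Rightarrow> ('x set list \<Rightarrow> 'g) \<Rightarrow> bool" where
  "DC_winning_II G \<phi> I \<sigma> \<longleftrightarrow>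
     (\<forall>a. (\<forall>n. a n \<in> I) \<longrightarrow>
        (let \<gamma> = play_II \<sigma> a in
          \<gamma> 0 = \<one>\<^bsub>G\<^esub> \<and>
          (\<forall>n. \<gamma> n \<in> pstab G \<phi> (\<Union>m<n. \<phi> (\<gamma> m) ` a m)) \<and>
          (\<Union>n. \<phi> (\<gamma> n) ` a n) \<in> I))"

end

theory Submission
  imports Defs
begin

(* Player II keeps the union S of the translated moves played so far together with
a reserve b \<in> I that is S-large; initially S = a\<^sub>0 and b = b\<^sub>0 is a\<^sub>0-large. Given a new
move a, take an (S \<union> a)-large set b\<^sub>1. As b is S-large, a \<union> b\<^sub>1 \<subseteq> h b for some h fixing S,
so \<gamma> = h\<inverse> fixes S and moves a \<union> b\<^sub>1 into b. Answering \<gamma>, the new reserve \<gamma> b\<^sub>1 \<subseteq> b is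
(S \<union> \<gamma> a)-large because largeness is invariant under the action. Since the reserves
shrink, every translated move lies in a\<^sub>0 \<union> b\<^sub>0 \<in> I. *)

locale dynamical_ideal_setting =
  fixes G :: "('g, 'm) monoid_scheme" (structure) and X :: "'x set"
    and \<phi> :: "'g \<Rightarrow> 'x \<Rightarrow> 'x" and I :: "'x set set"
  assumes dyn_ideal: "dynamical_ideal G X \<phi> I"
begin

sublocale group_action G X \<phi>
  using dyn_ideal unfolding dynamical_ideal_def by blast

sublocale group G
  using group_hom unfolding group_hom_def by blast

lemma ideal_subset: "a \<in> I \<Longrightarrow> a \<subseteq> X"
  using dyn_ideal unfolding dynamical_ideal_def is_ideal_on_def by blast

lemma ideal_downward_closed: "a \<in> I \<Longrightarrow> b \<subseteq> a \<Longrightarrow> b \<in> I"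
  using dyn_ideal unfolding dynamical_ideal_def is_ideal_on_def by blast

lemma ideal_Un: "a \<in> I \<Longrightarrow> b \<in> I \<Longrightarrow> a \<union> b \<in> I"
  using dyn_ideal unfolding dynamical_ideal_def is_ideal_on_def by blast

lemma ideal_image: "g \<in> carrier G \<Longrightarrow> a \<in> I \<Longrightarrow> \<phi> g ` a \<in> I"
  using dyn_ideal unfolding dynamical_ideal_def by blast

lemma image_one: "c \<subseteq> X \<Longrightarrow> \<phi> \<one> ` c = c"
  using id_eq_one[symmetric] by (force simp: subset_iff)

lemma inv_image_cancel:
  assumes "g \<in> carrier G" "c \<subseteq> X"
  shows "\<phi> (inv g) ` \<phi> g ` c = c"
  using orbit_sym_aux[OF assms(1)] assms(2) by (force simp: image_image subset_iff)

lemma image_inv_cancel: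
  assumes "g \<in> carrier G" "c \<subseteq> X"
  shows "\<phi> g ` \<phi> (inv g) ` c = c"
  using inv_image_cancel[of "inv g" c] assms by simp

lemma action_conjugate:
  assumes "g \<in> carrier G" "h \<in> carrier G" "x \<in> X"
  shows "\<phi> (g \<otimes> h \<otimes> inv g) (\<phi> g x) = \<phi> g (\<phi> h x)"
proof -
  have "\<phi> g x \<in> X"
    using assms(1,3) by (rule element_image) (rule refl)
  then have "\<phi> (g \<otimes> h \<otimes> inv g) (\<phi> g x) = \<phi> (g \<otimes> h) (\<phi> (inv g) (\<phi> g x))"
    using assms by (simp add: composition_rule)
  also have "\<dots> = \<phi> g (\<phi> h x)"
    using assms by (simp add: orbit_sym_aux composition_rule)
  finally show ?thesis .
qed

lemma pstab_carrier: "g \<in> pstab G \<phi> S \<Longrightarrow> g \<in> carrier G"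
  unfolding pstab_def by blast

lemma pstab_image: "g \<in> pstab G \<phi> S \<Longrightarrow> \<phi> g ` S = S"
  unfolding pstab_def by force

lemma pstab_inv:
  assumes "h \<in> pstab G \<phi> S" "S \<subseteq> X"
  shows "inv h \<in> pstab G \<phi> S"
  using assms orbit_sym_aux[of h] unfolding pstab_def by (auto simp: subset_iff)

lemma pstab_conjugate:
  assumes "h \<in> pstab G \<phi> S" "g \<in> carrier G" "S \<subseteq> X"
  shows "g \<otimes> h \<otimes> inv g \<in> pstab G \<phi> (\<phi> g ` S)"
  using assms action_conjugate[OF assms(2) pstab_carrier[OF assms(1)]]
  unfolding pstab_def by (auto simp: subset_iff)

lemma is_large_image:
  assumes large: "is_large G \<phi> I A B" and g: "g \<in> carrier G" and "A \<subseteq> X" "B \<subseteq> X"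
  shows "is_large G \<phi> I (\<phi> g ` A) (\<phi> g ` B)"
  unfolding is_large_def
proof
  fix c assume c: "c \<in> I"
  then obtain h where h: "h \<in> pstab G \<phi> A" and hB: "\<phi> (inv g) ` c \<subseteq> \<phi> h ` B"
    using large ideal_image[OF inv_closed[OF g]] unfolding is_large_def by blast
  have "c = \<phi> g ` \<phi> (inv g) ` c"
    using image_inv_cancel[OF g ideal_subset[OF c]] by simp
  also have "\<dots> \<subseteq> \<phi> g ` \<phi> h ` B"
    using hB by blast
  also have "\<dots> = \<phi> (g \<otimes> h \<otimes> inv g) ` \<phi> g ` B"
    unfolding image_image using action_conjugate[OF g pstab_carrier[OF h]] \<open>B \<subseteq> X\<close>
    by (intro image_cong) auto
  finally show "\<exists>k\<in>pstab G \<phi> (\<phi> g ` A). c \<subseteq> \<phi> k ` \<phi> g ` B"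
    using pstab_conjugate[OF h g \<open>A \<subseteq> X\<close>] by (rule bexI)
qed

end

locale cofinal_dynamical_ideal = dynamical_ideal_setting G X \<phi> I
  for G :: "('g, 'm) monoid_scheme" (structure) and X :: "'x set"
    and \<phi> :: "'g \<Rightarrow> 'x \<Rightarrow> 'x" and I :: "'x set set" +
  assumes cofinal: "cofinal_orbits G \<phi> I"
begin

lemma is_large_extend:
  assumes S: "S \<in> I" and b: "b \<in> I" and a: "a \<in> I" and large: "is_large G \<phi> I S b"
  shows "\<exists>g b'. g \<in> pstab G \<phi> S \<and> \<phi> g ` a \<subseteq> b \<and> b' \<subseteq> b \<and>
           is_large G \<phi> I (S \<union> \<phi> g ` a) b'"
proof -
  obtain b\<^sub>1 where b\<^sub>1: "b\<^sub>1 \<in> I" "is_large G \<phi> I (S \<union> a) b\<^sub>1"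
    using cofinal ideal_Un[OF S a] unfolding cofinal_orbits_def by blast
  then obtain h where h: "h \<in> pstab G \<phi> S" and hb: "a \<union> b\<^sub>1 \<subseteq> \<phi> h ` b"
    using large ideal_Un[OF a] unfolding is_large_def by blast
  define g where "g = inv h"
  have g: "g \<in> pstab G \<phi> S" "g \<in> carrier G"
    unfolding g_def using pstab_inv[OF h ideal_subset[OF S]] pstab_carrier by auto
  have "\<phi> g ` (a \<union> b\<^sub>1) \<subseteq> \<phi> g ` \<phi> h ` b"
    using hb by blast
  also have "\<dots> = b"
    unfolding g_def using inv_image_cancel[OF pstab_carrier[OF h] ideal_subset[OF b]] .
  finally have into_b: "\<phi> g ` (a \<union> b\<^sub>1) \<subseteq> b" .
  have "is_large G \<phi> I (\<phi> g ` (S \<union> a)) (\<phi> g ` b\<^sub>1)"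
    using is_large_image[OF b\<^sub>1(2) g(2)] ideal_subset[OF ideal_Un[OF S a]] ideal_subset[OF b\<^sub>1(1)]
    by blast
  moreover have "\<phi> g ` (S \<union> a) = S \<union> \<phi> g ` a"
    using pstab_image[OF g(1)] by (simp add: image_Un)
  ultimately have "is_large G \<phi> I (S \<union> \<phi> g ` a) (\<phi> g ` b\<^sub>1)"
    by simp
  moreover have "\<phi> g ` a \<subseteq> b" "\<phi> g ` b\<^sub>1 \<subseteq> b"
    using into_b by auto
  ultimately show ?thesis
    using g(1) by blast
qed

definition large_witness :: "'x set \<Rightarrow> 'x set" where
  "large_witness a = (SOME b. b \<in> I \<and> is_large G \<phi> I a b)"

lemma large_witness:
  assumes "a \<in> I"
  shows "large_witness a \<in> I \<and> is_large G \<phi> I a (large_witness a)"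
proof -
  have "\<exists>b. b \<in> I \<and> is_large G \<phi> I a b"
    using cofinal assms unfolding cofinal_orbits_def by blast
  then show ?thesis
    unfolding large_witness_def by (rule someI_ex)
qed

fun dc_step :: "'g \<times> 'x set \<times> 'x set \<Rightarrow> 'x set \<Rightarrow> 'g \<times> 'x set \<times> 'x set" where
  "dc_step (_, S, b) a = (SOME (g, S', b'). g \<in> pstab G \<phi> S \<and> \<phi> g ` a \<subseteq> b \<and>
     S' = S \<union> \<phi> g ` a \<and> b' \<subseteq> b \<and> is_large G \<phi> I S' b')"

lemma dc_step:
  assumes "S \<in> I" "b \<in> I" "a \<in> I" "is_large G \<phi> I S b"
    and step: "dc_step (g\<^sub>0, S, b) a = (g, S', b')"
  shows "g \<in> pstab G \<phi> S \<and> \<phi> g ` a \<subseteq> b \<and> S' = S \<union> \<phi> g ` a \<and> b' \<subseteq> b \<and>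
    is_large G \<phi> I S' b'"
proof -
  define P where "P = (\<lambda>(g, S', b'). g \<in> pstab G \<phi> S \<and> \<phi> g ` a \<subseteq> b \<and>
     S' = S \<union> \<phi> g ` a \<and> b' \<subseteq> b \<and> is_large G \<phi> I S' b')"
  obtain g\<^sub>1 b\<^sub>1 where "P (g\<^sub>1, S \<union> \<phi> g\<^sub>1 ` a, b\<^sub>1)"
    using is_large_extend[OF assms(1-4)] unfolding P_def by auto
  then have "P (SOME p. P p)"
    by (rule someI)
  moreover have "(SOME p. P p) = (g, S', b')"
    using step unfolding P_def by simp
  ultimately have "P (g, S', b')"
    by simp
  then show ?thesis
    unfolding P_def by blast
qed

definition dc_start :: "'x set \<Rightarrow> 'g \<times> 'x set \<times> 'x set" where
  "dc_start a = (\<one>, a, large_witness a)"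

definition dc_run :: "(nat \<Rightarrow> 'x set) \<Rightarrow> nat \<Rightarrow> 'g \<times> 'x set \<times> 'x set" where
  "dc_run a n = foldl dc_step (dc_start (a 0)) (map a [1..<Suc n])"

lemma dc_run_0: "dc_run a 0 = dc_start (a 0)"
  by (simp add: dc_run_def)

lemma dc_run_Suc: "dc_run a (Suc n) = dc_step (dc_run a n) (a (Suc n))"
  by (simp add: dc_run_def)

definition dc_strategy :: "'x set list \<Rightarrow> 'g" where
  "dc_strategy xs = fst (foldl dc_step (dc_start (hd xs)) (tl xs))"

lemma play_II_dc_strategy: "play_II dc_strategy a n = fst (dc_run a n)"
proof -
  have "[0..<Suc n] = 0 # [1..<Suc n]"
    by (metis One_nat_def upt_conv_Cons zero_less_Suc)
  then show ?thesis
    by (simp add: play_II_def dc_strategy_def dc_run_def)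
qed

context
  fixes a :: "nat \<Rightarrow> 'x set"
  assumes moves: "\<And>n. a n \<in> I"
begin

lemma dc_bound_in_ideal: "a 0 \<union> large_witness (a 0) \<in> I"
  using large_witness[OF moves] ideal_Un[OF moves] by blast

lemma dc_run_invariant:
  "dc_run a n = (g, S, b) \<Longrightarrow>
    is_large G \<phi> I S b \<and> S \<subseteq> a 0 \<union> large_witness (a 0) \<and> b \<subseteq> large_witness (a 0)"
proof (induction n arbitrary: g S b)
  case 0
  then show ?case
    using large_witness[OF moves] by (auto simp: dc_run_0 dc_start_def)
next
  case (Suc n)
  obtain g\<^sub>0 S\<^sub>0 b\<^sub>0 where run: "dc_run a n = (g\<^sub>0, S\<^sub>0, b\<^sub>0)"
    by (rule prod_cases3)
  note IH = Suc.IH[OF run]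
  have "S\<^sub>0 \<in> I" "b\<^sub>0 \<in> I"
    using IH dc_bound_in_ideal ideal_downward_closed by blast+
  moreover have "dc_step (g\<^sub>0, S\<^sub>0, b\<^sub>0) (a (Suc n)) = (g, S, b)"
    using Suc.prems run by (simp add: dc_run_Suc)
  ultimately have "\<phi> g ` a (Suc n) \<subseteq> b\<^sub>0 \<and> S = S\<^sub>0 \<union> \<phi> g ` a (Suc n) \<and> b \<subseteq> b\<^sub>0 \<and>
      is_large G \<phi> I S b"
    using dc_step[OF _ _ moves IH[THEN conjunct1]] by blast
  then show ?case
    using IH by blast
qed

lemma dc_run_step:
  assumes "dc_run a n = (g\<^sub>0, S\<^sub>0, b\<^sub>0)" "dc_run a (Suc n) = (g, S, b)"
  shows "g \<in> pstab G \<phi> S\<^sub>0 \<and> S = S\<^sub>0 \<union> \<phi> g ` a (Suc n)"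
proof -
  have "S\<^sub>0 \<in> I" "b\<^sub>0 \<in> I"
    using dc_run_invariant[OF assms(1)] dc_bound_in_ideal ideal_downward_closed by blast+
  moreover have "dc_step (g\<^sub>0, S\<^sub>0, b\<^sub>0) (a (Suc n)) = (g, S, b)"
    using assms by (simp add: dc_run_Suc)
  ultimately show ?thesis
    using dc_step[OF _ _ moves dc_run_invariant[OF assms(1), THEN conjunct1]] by blast
qed

lemma dc_run_played: "fst (snd (dc_run a n)) = (\<Union>m\<le>n. \<phi> (fst (dc_run a m)) ` a m)"
proof (induction n)
  case 0
  then show ?case
    using image_one[OF ideal_subset[OF moves]] by (simp add: dc_run_0 dc_start_def)
next
  case (Suc n)
  obtain g\<^sub>0 S\<^sub>0 b\<^sub>0 where run: "dc_run a n = (g\<^sub>0, S\<^sub>0, b\<^sub>0)"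
    by (rule prod_cases3)
  obtain g S b where run': "dc_run a (Suc n) = (g, S, b)"
    by (rule prod_cases3)
  have "S = S\<^sub>0 \<union> \<phi> g ` a (Suc n)"
    using dc_run_step[OF run run'] by blast
  then show ?case
    using Suc.IH run run' by (simp add: atMost_Suc Un_commute)
qed

lemma dc_run_answer_in_pstab: "fst (dc_run a n) \<in> pstab G \<phi> (\<Union>m<n. \<phi> (fst (dc_run a m)) ` a m)"
proof (cases n)
  case 0
  then show ?thesis
    by (simp add: dc_run_0 dc_start_def pstab_def)
next
  case (Suc k)
  obtain g\<^sub>0 S\<^sub>0 b\<^sub>0 where run: "dc_run a k = (g\<^sub>0, S\<^sub>0, b\<^sub>0)"
    by (rule prod_cases3)
  obtain g S b where run': "dc_run a (Suc k) = (g, S, b)"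
    by (rule prod_cases3)
  have "g \<in> pstab G \<phi> S\<^sub>0"
    using dc_run_step[OF run run'] by blast
  moreover have "S\<^sub>0 = (\<Union>m<Suc k. \<phi> (fst (dc_run a m)) ` a m)"
    using dc_run_played[of k] run by (simp add: lessThan_Suc_atMost)
  ultimately show ?thesis
    using Suc run' by simp
qed

end

lemma dc_strategy_winning: "DC_winning_II G \<phi> I dc_strategy"
  unfolding DC_winning_II_def Let_def play_II_dc_strategy
proof (intro allI impI conjI)
  fix a :: "nat \<Rightarrow> 'x set"
  assume "\<forall>n. a n \<in> I"
  then have moves: "\<And>n. a n \<in> I"
    by blast
  show "fst (dc_run a 0) = \<one>"
    by (simp add: dc_run_0 dc_start_def)
  show "fst (dc_run a n) \<in> pstab G \<phi> (\<Union>m<n. \<phi> (fst (dc_run a m)) ` a m)" for n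
    using dc_run_answer_in_pstab[OF moves] .
  have "\<phi> (fst (dc_run a n)) ` a n \<subseteq> a 0 \<union> large_witness (a 0)" for n
  proof -
    obtain g S b where run: "dc_run a n = (g, S, b)"
      by (rule prod_cases3)
    have "\<phi> (fst (dc_run a n)) ` a n \<subseteq> S"
      using dc_run_played[of a n, OF moves] run by auto
    also have "S \<subseteq> a 0 \<union> large_witness (a 0)"
      using dc_run_invariant[OF moves run] by blast
    finally show ?thesis .
  qed
  then show "(\<Union>n. \<phi> (fst (dc_run a n)) ` a n) \<in> I"
    by (meson UN_least ideal_downward_closed dc_bound_in_ideal[OF moves])
qed

end

theorem mainTheorem9:
  fixes G :: "('g, 'm) monoid_scheme" and X :: "'x set" and \<phi> :: "'g \<Rightarrow> 'x \<Rightarrow> 'x"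
    and I :: "'x set set"
  assumes "dynamical_ideal G X \<phi> I"
    and "cofinal_orbits G \<phi> I"
  shows "\<exists>\<sigma>. DC_winning_II G \<phi> I \<sigma>"
proof -
  interpret cofinal_dynamical_ideal G X \<phi> I
    by unfold_locales (fact assms)+
  show ?thesis
    using dc_strategy_winning by blast
qed

end
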